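(* Let $n\ge 1$ and $k\in\{0,1,\dots,n-1\}$ be integers. Then $$B_{k}^{(-n)}=\frac{1}{n!\binom{n+k}{k}}\sum_{j=0}^{n+k-1}E(n+k,j)\binom{j}{k}.$$
   Context: The Bernoulli numbers of higher order $B_j^{(a)}$ (for integer $a$) are defined by $\sum_{j=0}^{\infty}B_{j}^{(a)}\frac{t^{j}}{j!}=\left(\frac{t}{e^{t}-1}\right)^{a}$. For $m\ge 1$ and $i=0,1,\dots,m-1$, the Eulerian numbers are $E(m,i)=\sum_{j=0}^{i}(-1)^{j}\binom{m+1}{j}(i+1-j)^{m}$. *)

theory Defs
  imports "HOL-Computational_Algebra.Formal_Power_Series"
begin

definition expm1_div_X :: "real fps" where
  "expm1_div_X = fps_shift 1 (fps_exp 1 - 1)"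

definition bernoulli_gf :: "int \<Rightarrow> real fps" where
  "bernoulli_gf a = (if a \<ge> 0 then (inverse expm1_div_X) ^ nat a
                     else expm1_div_X ^ nat (- a))"

definition higher_bernoulli :: "int \<Rightarrow> nat \<Rightarrow> real" where
  "higher_bernoulli a j = fact j * fps_nth (bernoulli_gf a) j"

definition eulerian :: "nat \<Rightarrow> nat \<Rightarrow> int" where
  "eulerian m i = (\<Sum>j=0..i. (-1) ^ j * int ((m + 1) choose j) * int (i + 1 - j) ^ m)"

end

theory Submission
  imports Defs
begin

text \<open>
  Put m = n + k and D = sum_{l <= n} (-1)^l C(n,l) (n-l)^m, the number of surjections
  of an m-set onto an n-set. Both sides equal k! D / m!.

  On the left, ((e^t - 1)/t)^n = e^{nt} (1 - e^{-t})^n / t^n, and the binomial theorem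
  gives the coefficient of t^k directly.

  On the right, the Eulerian numbers E(m,j) are the coefficients of
  (1 - x)^{m+1} sum_i (i+1)^m x^i. Dividing by (1 - x)^{k+1}, i.e. multiplying by
  sum_i C(i+k,k) x^i, leaves (1 - x)^n sum_i (i+1)^m x^i, whose coefficient of x^{n-1}
  is D; so sum_i C(i+k,k) E(m, n-1-i) = D. The symmetry E(m,j) = E(m, m-1-j), which
  comes from the vanishing of (m+1)-st differences of polynomials of degree m, turns
  this convolution into sum_j E(m,j) C(j,k).
\<close>

unbundle fps_syntax

lemma one_minus_fps_power:
  fixes f :: "'a :: comm_ring_1 fps"
  shows "(1 - f) ^ N = (\<Sum>l\<le>N. fps_const ((-1) ^ l * of_nat (N choose l)) * f ^ l)"
proof -
  have "(-1 :: 'a fps) = fps_const (-1)"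
    by (simp only: fps_const_neg[symmetric] fps_const_1_eq_1)
  then have sign: "(-1 :: 'a fps) ^ l = fps_const ((-1) ^ l)" for l
    by (simp only: fps_const_power)
  have "(1 - f) ^ N = (- f + 1) ^ N"
    by (simp only: diff_conv_add_uminus add.commute)
  also have "\<dots> = (\<Sum>l\<le>N. of_nat (N choose l) * (- f) ^ l * 1 ^ (N - l))"
    by (rule binomial_ring)
  also have "\<dots> = (\<Sum>l\<le>N. fps_const ((-1) ^ l * of_nat (N choose l)) * f ^ l)"
    unfolding power_minus[of f] sign fps_const_mult[symmetric] fps_of_nat
    by (simp only: power_one mult_1_left mult_1_right mult_ac)
  finally show ?thesis .
qed

lemma one_minus_fps_X_power_nth:
  "((1 - fps_X) ^ N :: 'a :: comm_ring_1 fps) $ l = (-1) ^ l * of_nat (N choose l)"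
  by (cases "l \<le> N") (simp_all add: one_minus_fps_power fps_sum_nth binomial_eq_0 mult_delta_right)

lemma fps_exp_times_one_minus_fps_exp_power_nth:
  fixes c :: "'a :: field_char_0"
  shows "(fps_exp c * (1 - fps_exp (-1)) ^ N) $ m =
     (\<Sum>l\<le>N. (-1) ^ l * of_nat (N choose l) * (c - of_nat l) ^ m) / fact m"
proof -
  have "fps_exp c * (1 - fps_exp (-1)) ^ N =
      (\<Sum>l\<le>N. fps_const ((-1) ^ l * of_nat (N choose l)) * (fps_exp c * fps_exp (- of_nat l)))"
    unfolding one_minus_fps_power sum_distrib_left fps_exp_power_mult by (simp only: mult.left_commute) simp
  also have "\<dots> = (\<Sum>l\<le>N. fps_const ((-1) ^ l * of_nat (N choose l)) * fps_exp (c - of_nat l))"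
    by (simp only: diff_conv_add_uminus fps_exp_add_mult)
  finally show ?thesis
    by (simp only: fps_sum_nth fps_mult_left_const_nth fps_exp_nth sum_divide_distrib
        times_divide_eq_right of_nat_fact)
qed

lemma alternating_binomial_sum_power_eq_0:
  fixes c :: "'a :: field_char_0"
  assumes "m < N"
  shows "(\<Sum>l\<le>N. (-1) ^ l * of_nat (N choose l) * (c - of_nat l) ^ m) = 0"
proof -
  have "(1 - fps_exp (-1 :: 'a)) $ 0 = 0" by simp
  then have "((1 - fps_exp (-1 :: 'a)) ^ N) $ i = 0" if "i \<le> m" for i
    using startsby_zero_power_prefix that assms by (meson le_less_trans)
  then have "(fps_exp c * (1 - fps_exp (-1)) ^ N) $ m = 0"
    unfolding fps_mult_nth by (intro sum.neutral) auto
  then show ?thesis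
    unfolding fps_exp_times_one_minus_fps_exp_power_nth by simp
qed

lemma expm1_div_X_power_nth:
  "(expm1_div_X ^ n) $ k =
     (\<Sum>l\<le>n. (-1) ^ l * of_nat (n choose l) * (of_nat n - of_nat l) ^ (n + k)) / fact (n + k)"
proof -
  have "expm1_div_X * fps_X = fps_exp 1 - 1"
    unfolding expm1_div_X_def by (intro fps_ext) simp
  also have "\<dots> = fps_exp 1 * (1 - fps_exp (-1))"
    by (simp add: right_diff_distrib fps_exp_add_mult[symmetric])
  finally have "(expm1_div_X * fps_X) ^ n = (fps_exp 1 * (1 - fps_exp (-1))) ^ n"
    by (rule arg_cong)
  then have "expm1_div_X ^ n * fps_X ^ n = fps_exp (of_nat n) * (1 - fps_exp (-1)) ^ n"
    by (simp only: power_mult_distrib fps_exp_power_mult mult_1_right)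
  then have "(expm1_div_X ^ n) $ k = (fps_exp (of_nat n) * (1 - fps_exp (-1)) ^ n) $ (n + k)"
    using fps_X_power_mult_right_nth[of "expm1_div_X ^ n" n "n + k"] by simp
  then show ?thesis
    unfolding fps_exp_times_one_minus_fps_exp_power_nth .
qed

lemma of_int_eulerian:
  "(of_int (eulerian m j) :: 'a :: comm_ring_1) =
     (\<Sum>l=0..j. (-1) ^ l * of_nat ((m + 1) choose l) * (of_nat (j + 1) - of_nat l) ^ m)"
  unfolding eulerian_def of_int_sum by (intro sum.cong refl) (auto simp: of_nat_diff)

lemma eulerian_fps:
  "Abs_fps (\<lambda>j. of_int (eulerian m j)) =
     (1 - fps_X) ^ (m + 1) * Abs_fps (\<lambda>i. of_nat (i + 1) ^ m :: 'a :: comm_ring_1)"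
proof (rule fps_ext)
  fix j
  show "Abs_fps (\<lambda>j. of_int (eulerian m j)) $ j =
      ((1 - fps_X) ^ (m + 1) * Abs_fps (\<lambda>i. of_nat (i + 1) ^ m :: 'a)) $ j"
    unfolding fps_mult_nth one_minus_fps_X_power_nth fps_nth_Abs_fps of_int_eulerian
    by (intro sum.cong refl) (auto simp: of_nat_diff add_diff_eq)
qed

lemma eulerian_sym:
  assumes "j < m"
  shows "eulerian m j = eulerian m (m - 1 - j)"
proof -
  \<comment> \<open>The terms with l > j of the vanishing (m+1)-st difference of (j+1-l)^m reflect,
    under l |-> m+1-l, to the terms of -E(m, m-1-j).\<close>
  define g :: "nat \<Rightarrow> real" where
    "g l = (-1) ^ l * of_nat ((m + 1) choose l) * (of_nat (j + 1) - of_nat l) ^ m" for l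
  have "0 = sum g {..m + 1}"
    unfolding g_def by (rule alternating_binomial_sum_power_eq_0[symmetric]) simp
  also have "\<dots> = sum g {0..j} + sum g {j + 1..m + 1}"
  proof -
    have "{..m + 1} = {0..j} \<union> {j + 1..m + 1}" using assms by auto
    then show ?thesis by (simp add: sum.union_disjoint)
  qed
  also have "sum g {0..j} = of_int (eulerian m j)"
    by (simp add: g_def of_int_eulerian)
  also have "sum g {j + 1..m + 1} = sum (\<lambda>i. g (m + 1 - i)) {0..m - j}"
    by (rule sum.reindex_bij_witness[where i="\<lambda>i. m + 1 - i" and j="\<lambda>i. m + 1 - i"]) (use assms in auto)
  also have "\<dots> = - (\<Sum>i=0..m - j. (-1) ^ i * of_nat ((m + 1) choose i) * (of_nat (m - j) - of_nat i) ^ m)"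
    unfolding sum_negf[symmetric]
  proof (intro sum.cong refl)
    fix i assume "i \<in> {0..m - j}"
    then have i: "i \<le> m - j" by simp
    have binom: "(m + 1) choose (m + 1 - i) = (m + 1) choose i"
      using i assms by (intro binomial_symmetric[symmetric]) auto
    have base: "of_nat (j + 1) - of_nat (m + 1 - i) = - (of_nat (m - j) - of_nat i :: real)"
      using i assms by (simp add: of_nat_diff)
    have sign: "(-1 :: real) ^ (m + 1 - i) * (-1) ^ m = - ((-1) ^ i)"
      using i assms by (auto simp: minus_one_power_iff)
    have "g (m + 1 - i) = ((-1) ^ (m + 1 - i) * (-1) ^ m) *
        (of_nat ((m + 1) choose i) * (of_nat (m - j) - of_nat i) ^ m)"
      unfolding g_def binom base power_minus[of "of_nat (m - j) - of_nat i :: real"] by (simp only: mult_ac)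
    then show "g (m + 1 - i) = - ((-1) ^ i * of_nat ((m + 1) choose i) * (of_nat (m - j) - of_nat i) ^ m)"
      unfolding sign by simp
  qed
  also have "(\<Sum>i=0..m - j. (-1) ^ i * of_nat ((m + 1) choose i) * (of_nat (m - j) - of_nat i :: real) ^ m) =
      of_int (eulerian m (m - 1 - j))"
  proof -
    have "{0..m - j} = insert (m - j) {0..m - 1 - j}" and "m - 1 - j + 1 = m - j"
      using assms by auto
    then show ?thesis
      unfolding of_int_eulerian using assms by simp
  qed
  finally show ?thesis by simp
qed

lemma inverse_one_minus_fps_X_power:
  "inverse ((1 - fps_X) ^ (k + 1)) = Abs_fps (\<lambda>i. of_nat ((i + k) choose k) :: 'a :: field_char_0)"
  using one_minus_const_fps_X_neg_power'[of "k + 1" "1 :: 'a"]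
  by (simp add: binomial_symmetric[of k "i + k" for i] add_ac)

lemma eulerian_binomial_convolution:
  fixes n k :: nat
  assumes "k < n"
  shows "(\<Sum>i=0..n - 1. of_nat ((i + k) choose k) * of_int (eulerian (n + k) (n - 1 - i))) =
    (\<Sum>l\<le>n. (-1) ^ l * of_nat (n choose l) * (of_nat n - of_nat l) ^ (n + k) :: 'a :: field_char_0)"
proof -
  define m where "m = n + k"
  define G where "G = (1 - fps_X) ^ n * Abs_fps (\<lambda>i. of_nat (i + 1) ^ m :: 'a)"
  have "inverse ((1 - fps_X) ^ (k + 1)) * (1 - fps_X) ^ (k + 1) = (1 :: 'a fps)"
    by (rule inverse_mult_eq_1) simp
  then have "G = inverse ((1 - fps_X) ^ (k + 1)) * ((1 - fps_X) ^ (k + 1) * G)"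
    by (metis mult.assoc mult_1)
  also have "(1 - fps_X) ^ (k + 1) * G = Abs_fps (\<lambda>j. of_int (eulerian m j))"
    unfolding G_def eulerian_fps m_def by (simp add: power_add mult_ac)
  finally have "G = Abs_fps (\<lambda>i. of_nat ((i + k) choose k)) * Abs_fps (\<lambda>j. of_int (eulerian m j))"
    by (simp only: inverse_one_minus_fps_X_power)
  then have "G $ (n - 1) = (\<Sum>i=0..n - 1. of_nat ((i + k) choose k) * of_int (eulerian m (n - 1 - i)))"
    by (simp add: fps_mult_nth)
  moreover have "G $ (n - 1) = (\<Sum>l\<le>n. (-1) ^ l * of_nat (n choose l) * (of_nat n - of_nat l) ^ m)"
  proof -
    have "{..n} = insert n {0..n - 1}" using assms by auto
    moreover have "m > 0" using assms by (simp add: m_def)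
    ultimately show ?thesis
      unfolding G_def fps_mult_nth one_minus_fps_X_power_nth using assms
      by (auto simp: of_nat_diff intro!: sum.cong)
  qed
  ultimately show ?thesis by (simp add: m_def)
qed

lemma sum_eulerian_times_binomial:
  fixes n k :: nat
  assumes "k < n"
  shows "(\<Sum>j=0..n + k - 1. of_int (eulerian (n + k) j) * of_nat (j choose k)) =
    (\<Sum>l\<le>n. (-1) ^ l * of_nat (n choose l) * (of_nat n - of_nat l) ^ (n + k) :: 'a :: field_char_0)"
proof -
  have "(\<Sum>j=0..n + k - 1. of_int (eulerian (n + k) j) * of_nat (j choose k)) =
      (\<Sum>j=k..n - 1 + k. of_int (eulerian (n + k) j) * (of_nat (j choose k) :: 'a))"
    using assms by (intro sum.mono_neutral_right) (auto simp: binomial_eq_0)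
  also have "\<dots> = (\<Sum>i=0..n - 1. of_int (eulerian (n + k) (i + k)) * of_nat ((i + k) choose k))"
    by (rule sum.shift_bounds_cl_nat_ivl[of _ 0, simplified])
  also have "\<dots> = (\<Sum>i=0..n - 1. of_nat ((i + k) choose k) * of_int (eulerian (n + k) (n - 1 - i)))"
  proof (intro sum.cong refl)
    fix i assume "i \<in> {0..n - 1}"
    then have "eulerian (n + k) (i + k) = eulerian (n + k) (n - 1 - i)"
      using assms eulerian_sym[of "i + k" "n + k"] by auto
    then show "of_int (eulerian (n + k) (i + k)) * of_nat ((i + k) choose k) =
        of_nat ((i + k) choose k) * (of_int (eulerian (n + k) (n - 1 - i)) :: 'a)"
      by simp
  qed
  finally show ?thesis
    using eulerian_binomial_convolution[OF assms] by simp
qed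

theorem mainTheorem4:
  fixes n k :: nat
  assumes "n \<ge> 1" and "k < n"
  shows "higher_bernoulli (- int n) k =
    1 / (fact n * of_nat ((n + k) choose k)) *
    (\<Sum>j=0..n+k-1. of_int (eulerian (n + k) j) * of_nat (j choose k))"
proof -
  have bernoulli: "higher_bernoulli (- int n) k = fact k * (expm1_div_X ^ n) $ k"
    using assms by (simp add: higher_bernoulli_def bernoulli_gf_def)
  have "real (fact k * fact n * ((n + k) choose k)) = real (fact (n + k))"
    using binomial_fact_lemma[of k "n + k"] by simp
  then have fact: "fact (n + k) = fact n * real ((n + k) choose k) * (fact k :: real)"
    by (simp add: mult_ac)
  show ?thesis
    unfolding bernoulli expm1_div_X_power_nth sum_eulerian_times_binomial[OF assms(2)] fact
    by (simp add: field_simps)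
qed
end
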